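(* Let $f:[0,\infty)\to\mathbb{R}$ be differentiable, let $0<a<b<\infty$, and suppose $f'$ is Lebesgue integrable on $[a,b]$. Let $m\in(0,1]$ and $q>1$, and suppose $|f'|^q$ is $(1,m)$-GA-convex on $[0,\max\{a^{1/m},b\}]$. Then \[ \biggl|\frac{b^2f(b)-a^2f(a)}{2}-\int_a^b xf(x)\,dx\biggr|\le\frac{(\ln b-\ln a)^{1-1/q}}{2}\Bigl(\frac{1}{3q}\Bigr)^{1/q}\Bigl\{m\bigl[L(a^{3q},b^{3q})-a^{3q}\bigr]\bigl|f'(a^{1/m})\bigr|^q+\bigl[b^{3q}-L(a^{3q},b^{3q})\bigr]|f'(b)|^q\Bigr\}^{1/q}. \]
   Context: For $c>0$, $h:[0,c]\to\mathbb{R}$ and $(\alpha,m)\in(0,1]^2$, $h$ is called $(\alpha,m)$-GA-convex on $[0,c]$ if $h\bigl(x^\lambda y^{m(1-\lambda)}\bigr)\le\lambda^\alpha h(x)+m(1-\lambda^\alpha)h(y)$ for all $x,y\in[0,c]$ and all $\lambda\in[0,1]$ (with the convention $0^0=1$). For $x,y>0$, $x\neq y$, the logarithmic mean is $L(x,y)=\frac{y-x}{\ln y-\ln x}$. *)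

theory Defs
  imports "HOL-Analysis.Analysis"
begin

text \<open>Real power with the convention 0^0 = 1 (for nonnegative bases).\<close>
definition gapow :: "real \<Rightarrow> real \<Rightarrow> real" where
  "gapow x t = (if t = 0 then 1 else x powr t)"

definition GA_convex :: "real \<Rightarrow> real \<Rightarrow> real \<Rightarrow> (real \<Rightarrow> real) \<Rightarrow> bool" where
  "GA_convex \<alpha> m c h \<longleftrightarrow>
     (\<forall>x\<in>{0..c}. \<forall>y\<in>{0..c}. \<forall>t\<in>{0..1}.
        h (gapow x t * gapow y (m * (1 - t)))
          \<le> gapow t \<alpha> * h x + m * (1 - gapow t \<alpha>) * h y)"

definition logmean :: "real \<Rightarrow> real \<Rightarrow> real" where
  "logmean x y = (y - x) / (ln y - ln x)"

end

theory Submission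
  imports Defs
begin

(*
  Writing J = b^2 f(b) - a^2 f(a) - 2 \<integral>_a^b x f(x) dx, integration by parts gives
  J = \<integral>_a^b x^2 f'(x) dx, so the left-hand side equals |J|/2.  We split
  x^2 = (1/x)^(1-1/q) * (x^(3q-1))^(1/q) and apply Hoelder's inequality (proved
  here from Young's inequality) with the weights 1/x and x^(3q-1) |f'(x)|^q.
  The first weight integrates to ln b - ln a.  For the second, GA-convexity
  applied at the geometric interpolation x = b^(1-s) (a^(1/m))^(m s) with
  s = (ln b - ln x)/(ln b - ln a) bounds |f'(x)|^q by a function that is affine
  in ln x; its weighted integral is computed in closed form through the
  logarithmic mean L(a^(3q), b^(3q)), which gives exactly the right-hand side.
*)

text \<open>The logarithmic mean lies strictly between its arguments; this makes the
  coefficients \<open>L - A\<close> and \<open>B - L\<close> in the final bound positive.\<close>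
lemma logmean_bounds:
  fixes A B :: real
  assumes "0 < A" "A < B"
  shows "A < logmean A B" "logmean A B < B"
proof -
  have D: "ln B - ln A > 0" using assms by simp
  have "ln B - ln A < (B - A) / A" using assms by (intro ln_diff_less) auto
  hence "A * (ln B - ln A) < B - A" using assms by (simp add: field_simps)
  thus "A < logmean A B" using D by (simp add: logmean_def pos_less_divide_eq)
  have "ln A - ln B < (A - B) / B" using assms by (intro ln_diff_less) auto
  hence "B - A < B * (ln B - ln A)" using assms by (simp add: field_simps)
  thus "logmean A B < B" using D by (simp add: logmean_def pos_divide_less_eq)
qed

text \<open>Every \<open>x \<in> [a,b]\<close> is the geometric interpolation \<open>b^(1-s) (a^(1/m))^(m s)\<close>
  of \<open>b\<close> and \<open>a^(1/m)\<close> with \<open>s = (ln b - ln x)/(ln b - ln a)\<close>.\<close>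
lemma GA_convex_log_interpolation:
  fixes h :: "real \<Rightarrow> real"
  assumes conv: "GA_convex 1 m c h"
    and ab: "0 < a" "a < b" and m: "0 < m"
    and c: "a powr (1/m) \<le> c" "b \<le> c"
    and x: "x \<in> {a..b}"
  shows "h x \<le> h b + (m * h (a powr (1/m)) - h b) * ((ln b - ln x) / (ln b - ln a))"
proof -
  define D where "D = ln b - ln a"
  define s where "s = (ln b - ln x) / D"
  have D: "D > 0" using ab by (simp add: D_def)
  have x0: "x > 0" using x ab by auto
  have s: "0 \<le> s" "s \<le> 1" using x x0 ab D by (auto simp: s_def D_def divide_simps)
  hence t: "1 - s \<in> {0..1}" by auto
  have points: "b \<in> {0..c}" "a powr (1/m) \<in> {0..c}" using ab c by auto
  have "b powr (1 - s) * a powr s = exp ((1 - s) * ln b + s * ln a)"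
    using ab by (simp add: powr_def exp_add)
  also have "(1 - s) * ln b + s * ln a = ln b - s * D" by (simp add: D_def algebra_simps)
  also have "s * D = ln b - ln x" using D by (simp add: s_def)
  finally have interp: "b powr (1 - s) * a powr s = x" using x0 by simp
  have "gapow (a powr (1/m)) (m * (1 - (1 - s))) = a powr s"
    using ab m by (auto simp: gapow_def powr_powr)
  moreover have "gapow b (1 - s) = b powr (1 - s)" "gapow (1 - s) 1 = 1 - s"
    using ab s by (simp_all add: gapow_def)
  ultimately have "h x \<le> (1 - s) * h b + m * (1 - (1 - s)) * h (a powr (1/m))"
    using conv[unfolded GA_convex_def, rule_format, OF points t] interp by simp
  also have "\<dots> = h b + (m * h (a powr (1/m)) - h b) * s" by (simp add: algebra_simps)
  finally show ?thesis by (simp add: s_def D_def)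
qed

lemma weighted_log_affine_integral:
  fixes a b c u v :: real
  assumes ab: "0 < a" "a < b" and c: "c > 0"
  defines "A \<equiv> a powr c" and "B \<equiv> b powr c"
  shows "((\<lambda>x. x powr (c - 1) * (v + (u - v) * ((ln b - ln x) / (ln b - ln a))))
           has_integral (u * (logmean A B - A) + v * (B - logmean A B)) / c) {a..b}"
proof -
  define D where "D = ln b - ln a"
  have D: "D > 0" using ab by (simp add: D_def)
  define G where "G = (\<lambda>x. v * x powr c / c
      + (u - v) / D * (x powr c * (ln b - ln x) / c + x powr c / c^2))"
  have "(G has_real_derivative x powr (c - 1) * (v + (u - v) * ((ln b - ln x) / D))) (at x)"
    if "x > 0" for x
  proof -
    have "x powr c * (1 / x) = x powr (c - 1)" using that by (simp add: powr_diff)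
    thus ?thesis unfolding G_def using that c D
      by (auto intro!: derivative_eq_intros simp: field_simps power2_eq_square)
  qed
  hence "((\<lambda>x. x powr (c - 1) * (v + (u - v) * ((ln b - ln x) / D))) has_integral (G b - G a)) {a..b}"
    using ab by (intro fundamental_theorem_of_calculus)
      (auto intro: has_field_derivative_at_within
            simp: has_real_derivative_iff_has_vector_derivative[symmetric])
  moreover have "G b - G a = (u * (logmean A B - A) + v * (B - logmean A B)) / c"
  proof -
    have "ln B - ln A = c * D" using ab by (simp add: A_def B_def D_def ln_powr algebra_simps)
    hence L: "logmean A B = (B - A) / (c * D)" by (simp add: logmean_def)
    have la: "ln a = ln b - D" by (simp add: D_def)
    show ?thesis using c D unfolding L G_def A_def[symmetric] B_def[symmetric] la
      by (simp add: field_simps power2_eq_square)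
  qed
  ultimately show ?thesis by (simp add: D_def)
qed

lemma inverse_has_integral_ln:
  fixes a b :: real
  assumes "0 < a" "a \<le> b"
  shows "((\<lambda>x. 1 / x) has_integral (ln b - ln a)) {a..b}"
  using assms by (intro fundamental_theorem_of_calculus)
    (auto intro!: has_field_derivative_at_within DERIV_ln_divide
          simp: has_real_derivative_iff_has_vector_derivative[symmetric])

lemma square_times_deriv_has_integral:
  fixes f f' :: "real \<Rightarrow> real"
  assumes "a \<le> b"
    and fder: "\<And>x. x \<in> {a..b} \<Longrightarrow> (f has_real_derivative f' x) (at x within {a..b})"
  shows "((\<lambda>x. x^2 * f' x) has_integral
           (b^2 * f b - a^2 * f a - 2 * integral {a..b} (\<lambda>x. x * f x))) {a..b}"
proof -
  have "continuous_on {a..b} f" by (rule DERIV_continuous_on[OF fder])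
  hence xf: "((\<lambda>x. x * f x) has_integral integral {a..b} (\<lambda>x. x * f x)) {a..b}"
    by (intro integrable_integral integrable_continuous_interval continuous_intros)
  have "((\<lambda>x. 2 * x * f x + x^2 * f' x) has_integral (b^2 * f b - a^2 * f a)) {a..b}"
    using assms by (intro fundamental_theorem_of_calculus[where f="\<lambda>x. x^2 * f x"])
      (auto intro!: derivative_eq_intros fder
            simp: has_real_derivative_iff_has_vector_derivative[symmetric])
  from has_integral_diff[OF this has_integral_mult_right[OF xf, of 2]]
  show ?thesis by (simp add: algebra_simps)
qed

text \<open>Hoelder's inequality in the form needed here, derived from Young's inequality
  \<open>X^r Y^s \<le> r X + s Y\<close> applied pointwise to the normalised weights \<open>u/U\<close> and \<open>v/V\<close>.\<close>
lemma holder_from_young: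
  fixes u v w :: "real \<Rightarrow> real" and S :: "real set"
  assumes u: "(u has_integral U) S" and v: "(v has_integral V) S"
    and w: "w integrable_on S"
    and UV: "U > 0" "V > 0"
    and rs: "0 \<le> r" "0 \<le> s" "r + s = 1"
    and nonneg: "\<And>x. x \<in> S \<Longrightarrow> u x \<ge> 0 \<and> v x \<ge> 0"
    and bound: "\<And>x. x \<in> S \<Longrightarrow> \<bar>w x\<bar> \<le> u x powr r * v x powr s"
  shows "\<bar>integral S w\<bar> \<le> U powr r * V powr s"
proof -
  define C where "C = U powr r * V powr s"
  define k where "k = (\<lambda>x. C * (r / U * u x + s / V * v x))"
  have "(k has_integral C * (r / U * U + s / V * V)) S"
    unfolding k_def by (intro has_integral_mult_right has_integral_add u v)
  hence k: "(k has_integral C) S" using UV rs by simp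
  have "norm (w x) \<le> k x" if x: "x \<in> S" for x
  proof -
    have young: "(u x / U) powr r * (v x / V) powr s \<le> r * (u x / U) + s * (v x / V)"
    proof (cases "u x = 0 \<or> v x = 0")
      case True thus ?thesis using nonneg[OF x] UV rs by auto
    next
      case False thus ?thesis using nonneg[OF x] UV rs by (intro Youngs_inequality_0) auto
    qed
    have "norm (w x) \<le> u x powr r * v x powr s" using bound[OF x] by simp
    also have "\<dots> = C * ((u x / U) powr r * (v x / V) powr s)"
      using UV by (simp add: C_def powr_divide)
    also have "\<dots> \<le> C * (r * (u x / U) + s * (v x / V))"
      using young by (simp add: C_def mult_left_mono)
    finally show ?thesis by (simp add: k_def)
  qed
  hence "norm (integral S w) \<le> integral S k"
    using w k by (intro integral_norm_bound_integral) auto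
  thus ?thesis using k by (simp add: C_def integral_unique)
qed

lemma square_split_holder_weights:
  fixes x y q :: real
  assumes "x > 0" "y \<ge> 0" "q > 0"
  shows "x^2 * y powr (1/q) = (1 / x) powr (1 - 1/q) * (x powr (3*q - 1) * y) powr (1/q)"
proof -
  have "(1 / x) powr (1 - 1/q) = 1 / x powr (1 - 1/q)"
    using assms by (simp add: powr_divide)
  also have "\<dots> = x powr (-(1 - 1/q))" by (rule powr_minus_divide[symmetric])
  finally have "(1 / x) powr (1 - 1/q) = x powr (-(1 - 1/q))" .
  moreover have "(x powr (3*q - 1) * y) powr (1/q) = x powr ((3*q - 1) / q) * y powr (1/q)"
    using assms by (simp add: powr_mult powr_powr)
  ultimately have "(1 / x) powr (1 - 1/q) * (x powr (3*q - 1) * y) powr (1/q)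
      = x powr (-(1 - 1/q) + (3*q - 1) / q) * y powr (1/q)"
    by (simp add: powr_add)
  also have "-(1 - 1/q) + (3*q - 1) / q = 2" using assms by (simp add: field_simps)
  finally show ?thesis using assms by simp
qed

lemma square_deriv_integral_bound:
  fixes f' g :: "real \<Rightarrow> real"
  assumes ab: "0 < a" "a < b" and q: "q > 1"
    and J: "((\<lambda>x. x^2 * f' x) has_integral J) {a..b}"
    and maj: "\<And>x. x \<in> {a..b} \<Longrightarrow> \<bar>f' x\<bar> powr q \<le> g x"
    and I: "((\<lambda>x. x powr (3*q - 1) * g x) has_integral I) {a..b}" "I > 0"
  shows "\<bar>J\<bar> \<le> (ln b - ln a) powr (1 - 1/q) * I powr (1/q)"
proof -
  have "\<bar>integral {a..b} (\<lambda>x. x^2 * f' x)\<bar> \<le> (ln b - ln a) powr (1 - 1/q) * I powr (1/q)"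
  proof (rule holder_from_young[OF inverse_has_integral_ln I(1)])
    fix x assume x: "x \<in> {a..b}"
    have x0: "x > 0" using x ab by auto
    have g: "g x \<ge> 0" using maj[OF x] powr_ge_zero order_trans by blast
    have "\<bar>f' x\<bar> = (\<bar>f' x\<bar> powr q) powr (1/q)" using q by (simp add: powr_powr)
    also have "\<dots> \<le> g x powr (1/q)" using maj[OF x] q by (intro powr_mono2) auto
    finally have "\<bar>x^2 * f' x\<bar> \<le> x^2 * g x powr (1/q)"
      by (simp add: abs_mult mult_left_mono)
    also have "\<dots> = (1 / x) powr (1 - 1/q) * (x powr (3*q - 1) * g x) powr (1/q)"
      using x0 g q by (intro square_split_holder_weights) auto
    finally show "\<bar>x^2 * f' x\<bar> \<le> (1 / x) powr (1 - 1/q) * (x powr (3*q - 1) * g x) powr (1/q)" .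
    show "1 / x \<ge> 0 \<and> x powr (3*q - 1) * g x \<ge> 0" using x0 g by simp
  qed (use ab q J I in \<open>auto intro: has_integral_integrable\<close>)
  thus ?thesis using J by (simp add: integral_unique)
qed

theorem corollary3p5:
  fixes f f' :: "real \<Rightarrow> real" and a b m q :: real
  assumes deriv: "\<And>x. x \<ge> 0 \<Longrightarrow> (f has_real_derivative f' x) (at x within {0..})"
    and ab: "0 < a" "a < b"
    and integ: "set_integrable lborel {a..b} f'"
    and m: "0 < m" "m \<le> 1"
    and q: "q > 1"
    and conv: "GA_convex 1 m (max (a powr (1/m)) b) (\<lambda>x. \<bar>f' x\<bar> powr q)"
  shows "\<bar>(b\<^sup>2 * f b - a\<^sup>2 * f a) / 2 - integral {a..b} (\<lambda>x. x * f x)\<bar>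
    \<le> (ln b - ln a) powr (1 - 1/q) / 2 * (1 / (3*q)) powr (1/q) *
       (m * (logmean (a powr (3*q)) (b powr (3*q)) - a powr (3*q)) * \<bar>f' (a powr (1/m))\<bar> powr q
        + (b powr (3*q) - logmean (a powr (3*q)) (b powr (3*q))) * \<bar>f' b\<bar> powr q) powr (1/q)"
proof -
  define A where "A = a powr (3*q)"
  define B where "B = b powr (3*q)"
  define L where "L = logmean A B"
  define h1 where "h1 = \<bar>f' (a powr (1/m))\<bar> powr q"
  define h2 where "h2 = \<bar>f' b\<bar> powr q"
  define K where "K = m * (L - A) * h1 + (B - L) * h2"
  define g where "g = (\<lambda>x. h2 + (m * h1 - h2) * ((ln b - ln x) / (ln b - ln a)))"
  define J where "J = b^2 * f b - a^2 * f a - 2 * integral {a..b} (\<lambda>x. x * f x)"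
  have "A < L" "L < B"
    using logmean_bounds[of A B] ab q by (simp_all add: A_def B_def L_def powr_less_mono2)
  hence K: "K \<ge> 0" using m by (simp add: K_def h1_def h2_def)
  have "(f has_real_derivative f' x) (at x within {a..b})" if "x \<in> {a..b}" for x
    using deriv[of x] that ab by (auto intro: has_field_derivative_subset)
  hence J: "((\<lambda>x. x^2 * f' x) has_integral J) {a..b}"
    unfolding J_def using ab by (intro square_times_deriv_has_integral) auto
  have maj: "\<bar>f' x\<bar> powr q \<le> g x" if "x \<in> {a..b}" for x
    using GA_convex_log_interpolation[OF conv ab m(1) _ _ that] by (simp add: g_def h1_def h2_def)
  have bound: "\<bar>J\<bar> \<le> (ln b - ln a) powr (1 - 1/q) * (K / (3*q)) powr (1/q)"
  proof (cases "h1 = 0 \<and> h2 = 0")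
    case True
    hence "f' x = 0" if "x \<in> {a..b}" for x
      using maj[OF that] by (simp add: g_def)
    hence "((\<lambda>x. x^2 * f' x) has_integral 0) {a..b}"
      by (intro has_integral_is_0) simp
    with J have "J = 0" by (rule has_integral_unique)
    thus ?thesis by simp
  next
    case False
    have "h1 \<ge> 0" "h2 \<ge> 0" by (simp_all add: h1_def h2_def)
    with False have "h1 > 0 \<or> h2 > 0" by auto
    with \<open>A < L\<close> \<open>L < B\<close> \<open>h1 \<ge> 0\<close> \<open>h2 \<ge> 0\<close> m have "K > 0"
      unfolding K_def by (smt (verit) mult_pos_pos mult_nonneg_nonneg)
    moreover have "((\<lambda>x. x powr (3*q - 1) * g x) has_integral K / (3*q)) {a..b}"
    proof -
      have "m * h1 * (L - A) + h2 * (B - L) = K" by (simp add: K_def algebra_simps)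
      thus ?thesis using weighted_log_affine_integral[of a b "3*q" h2 "m * h1"] ab q
        unfolding g_def L_def A_def B_def by simp
    qed
    ultimately show ?thesis using square_deriv_integral_bound[OF ab q J maj] q by simp
  qed
  have "(b\<^sup>2 * f b - a\<^sup>2 * f a) / 2 - integral {a..b} (\<lambda>x. x * f x) = J / 2"
    by (simp add: J_def field_simps)
  hence "\<bar>(b\<^sup>2 * f b - a\<^sup>2 * f a) / 2 - integral {a..b} (\<lambda>x. x * f x)\<bar> = \<bar>J\<bar> / 2"
    by (simp only: abs_divide abs_numeral)
  also have "\<dots> \<le> (ln b - ln a) powr (1 - 1/q) * (K / (3*q)) powr (1/q) / 2"
    using bound by simp
  also have "\<dots> = (ln b - ln a) powr (1 - 1/q) / 2 * (1 / (3*q)) powr (1/q) * K powr (1/q)"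
    using K q by (simp add: powr_divide)
  finally show ?thesis unfolding K_def L_def A_def B_def h1_def h2_def .
qed

end
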